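(* Let $\alpha\in\mathbb{N}_0$ and let $L_{2\alpha+4,x}^{\alpha}y(x)=(-1)^{\alpha+1}e^x x\,D_x^{\alpha+2}\{e^{-x}D_x^{\alpha+2}[x^{\alpha+1}y(x)]\}$. Then for all $y,u\in C^{(2\alpha+4)}(0,\infty)$ and $x>0$: $$L_{2\alpha+4,x}^{\alpha}y(x)=(-1)^{\alpha+1}\prod_{j=0}^{\alpha+1}\Big\{L_{2,x}^{\alpha}-\frac{\alpha+1}{x}-j\Big\}y(x),\qquad L_{2\alpha+4,x}^{\alpha}[xu(x)]=(-1)^{\alpha+1}x\prod_{j=0}^{\alpha+1}\big\{L_{2,x}^{\alpha+2}-j-1\big\}u(x),$$ and $$L_{2\alpha+4,x}^{\alpha}y(x)=(-1)^{\alpha+1}\prod_{j=0}^{\alpha+1}\Big\{L_{2,x}^{2j-1}-\frac{2j}{x}-j\Big\}y(x),\qquad L_{2\alpha+4,x}^{\alpha}[xu(x)]=(-1)^{\alpha+1}x\prod_{j=0}^{\alpha+1}\big\{L_{2,x}^{2j+1}-j-1\big\}u(x).$$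
   Context: $D_x^i$ is the $i$-fold derivative. For real $\gamma$ (including $\gamma=-1$), $L_{2,x}^{\gamma}=xD_x^2+(\gamma+1-x)D_x$ (so $L_{2,x}^{-1}=x[D_x^2-D_x]$); terms like $-\frac{c}{x}$ act as multiplication operators. The product $\prod_{j=0}^{\alpha+1}\{A_j\}$ of differential expressions is non-commutative and means $A_{\alpha+1}A_{\alpha}\cdots A_1A_0$, i.e. the factors are applied successively to the function on the right in order $j=0,1,\dots,\alpha+1$. *)

theory Defs
  imports "HOL-Analysis.Analysis"
begin

abbreviation Dr :: "(real \<Rightarrow> real) \<Rightarrow> real \<Rightarrow> real" where
  "Dr \<equiv> deriv"

definition C_k_on :: "nat \<Rightarrow> real set \<Rightarrow> (real \<Rightarrow> real) \<Rightarrow> bool" where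
  "C_k_on k S f \<longleftrightarrow>
     (\<forall>j<k. \<forall>x\<in>S. ((Dr ^^ j) f) differentiable (at x)) \<and>
     continuous_on S ((Dr ^^ k) f)"

definition L2 :: "real \<Rightarrow> (real \<Rightarrow> real) \<Rightarrow> real \<Rightarrow> real" where
  "L2 \<gamma> f = (\<lambda>x. x * (Dr ^^ 2) f x + (\<gamma> + 1 - x) * deriv f x)"

text \<open>Non-commutative product of operators: opprod A n = A (n-1) o ... o A 1 o A 0,
  i.e. A 0 is applied first.\<close>
primrec opprod :: "(nat \<Rightarrow> (real \<Rightarrow> real) \<Rightarrow> real \<Rightarrow> real) \<Rightarrow> nat \<Rightarrow> (real \<Rightarrow> real) \<Rightarrow> real \<Rightarrow> real" where
  "opprod A 0 f = f"
| "opprod A (Suc n) f = A n (opprod A n f)"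

definition Lhigh :: "nat \<Rightarrow> (real \<Rightarrow> real) \<Rightarrow> real \<Rightarrow> real" where
  "Lhigh \<alpha> y = (\<lambda>x. (-1) ^ (\<alpha> + 1) * exp x * x *
      (Dr ^^ (\<alpha> + 2)) (\<lambda>t. exp (- t) * (Dr ^^ (\<alpha> + 2)) (\<lambda>s. s ^ (\<alpha> + 1) * y s) t) x)"

end

theory Submission
  imports Defs
begin

text \<open>
  Since x^(\<alpha>+1) (x u) = x^(\<alpha>+2) u and e^x D^n e^(-x) = (D - 1)^n, the operator applied
  to x u is (-1)^(\<alpha>+1) x T_(\<alpha>+2) u with T_n u = (D - 1)^n D^n [x^n u]. The Leibniz rule
  D^(n+1) [x w] = x D^(n+1) w + (n+1) D^n w and the commutation
  (D - 1)(L_2^\<gamma> - c) = (L_2^(\<gamma>+1) - c)(D - 1) give T_(n+1) = (L_2^(2n+1) - n - 1) T_n,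
  which is the fourth identity. The commutation
  (L_2^a - m - 2)(L_2^(a+m) - m - 1) = (L_2^(a+m+1) - m - 2)(L_2^(a-1) - m - 1)
  reorders that product into the one with constant parameter \<alpha> + 2, the second identity.
  Finally, writing y = x v, the conjugation
  L_2^\<gamma> [x v] - (\<gamma>+1) v - c x v = x (L_2^(\<gamma>+2) - c - 1) v
  reduces the first and third identities to the second and fourth.
\<close>

section \<open>Higher derivatives on open sets\<close>

definition differentiable_upto :: "nat \<Rightarrow> real set \<Rightarrow> (real \<Rightarrow> real) \<Rightarrow> bool" where
  "differentiable_upto k S f \<longleftrightarrow> (\<forall>j<k. \<forall>x\<in>S. (deriv ^^ j) f differentiable (at x))"

lemma C_k_on_imp_differentiable_upto: "C_k_on k S f \<Longrightarrow> differentiable_upto k S f"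
  by (simp add: C_k_on_def differentiable_upto_def)

lemma higher_deriv_Suc: "(deriv ^^ Suc j) f = (deriv ^^ j) (deriv f)"
  by (simp add: funpow_Suc_right del: funpow.simps)

lemma differentiable_upto_0 [simp]: "differentiable_upto 0 S f"
  by (simp add: differentiable_upto_def)

lemma differentiable_upto_Suc:
  "differentiable_upto (Suc k) S f \<longleftrightarrow>
     (\<forall>x\<in>S. f differentiable (at x)) \<and> differentiable_upto k S (deriv f)"
  unfolding differentiable_upto_def
  by (auto simp: less_Suc_eq_0_disj higher_deriv_Suc simp del: funpow.simps)

lemma differentiable_upto_mono: "differentiable_upto k S f \<Longrightarrow> j \<le> k \<Longrightarrow> differentiable_upto j S f"
  by (auto simp: differentiable_upto_def)

lemma differentiable_upto_higher_deriv:
  "differentiable_upto (k + m) S f \<Longrightarrow> differentiable_upto k S ((deriv ^^ m) f)"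
proof (induction m arbitrary: k)
  case (Suc m)
  then have "differentiable_upto (Suc k) S ((deriv ^^ m) f)" by simp
  then show ?case by (simp add: differentiable_upto_Suc)
qed simp

lemma has_real_derivative_higher_deriv:
  "differentiable_upto k S f \<Longrightarrow> j < k \<Longrightarrow> x \<in> S \<Longrightarrow>
     ((deriv ^^ j) f has_real_derivative (deriv ^^ Suc j) f x) (at x)"
  by (simp add: differentiable_upto_def DERIV_deriv_iff_real_differentiable)

lemma has_real_derivative_deriv:
  "differentiable_upto k S f \<Longrightarrow> 0 < k \<Longrightarrow> x \<in> S \<Longrightarrow> (f has_real_derivative deriv f x) (at x)"
  using has_real_derivative_higher_deriv[of k S f 0] by simp

lemma differentiable_upto_const [simp]: "differentiable_upto k S (\<lambda>t. c)"
proof (induction k arbitrary: c)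
  case (Suc k)
  then show ?case by (simp add: differentiable_upto_Suc)
qed simp

lemma differentiable_upto_id [simp]: "differentiable_upto k S (\<lambda>t. t)"
proof (cases k)
  case (Suc k')
  have "deriv (\<lambda>t::real. t) = (\<lambda>t. 1)"
    by (rule ext, rule DERIV_imp_deriv) (auto intro!: derivative_eq_intros)
  with Suc show ?thesis by (simp add: differentiable_upto_Suc)
qed simp

context
  fixes S :: "real set"
  assumes open_S: "open S"
begin

lemma higher_deriv_cong_on:
  assumes "\<forall>t\<in>S. f t = g t" and "x \<in> S"
  shows "(deriv ^^ k) f x = (deriv ^^ k) g x"
  using assms(2)
proof (induction k arbitrary: x)
  case (Suc k)
  have "\<forall>\<^sub>F t in nhds x. (deriv ^^ k) f t = (deriv ^^ k) g t"
    using eventually_nhds_in_open[OF open_S Suc.prems] by (rule eventually_mono) (rule Suc.IH)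
  then show ?case by (simp add: deriv_cong_ev)
qed (use assms(1) in simp)

lemma deriv_cong_on: "\<forall>t\<in>S. f t = g t \<Longrightarrow> x \<in> S \<Longrightarrow> deriv f x = deriv g x"
  using higher_deriv_cong_on[of f g x 1] by simp

lemma differentiable_upto_cong_on:
  assumes "differentiable_upto k S f" and "\<forall>t\<in>S. f t = g t"
  shows "differentiable_upto k S g"
  unfolding differentiable_upto_def
proof (intro allI impI ballI)
  fix j x assume "j < k" "x \<in> S"
  then obtain D where "((deriv ^^ j) f has_derivative D) (at x)"
    using assms(1) by (auto simp: differentiable_upto_def differentiable_def)
  then have "((deriv ^^ j) g has_derivative D) (at x)"
    by (rule has_derivative_transform_within_open[OF _ open_S \<open>x \<in> S\<close>])
       (use higher_deriv_cong_on[OF assms(2)] in auto)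
  then show "(deriv ^^ j) g differentiable (at x)"
    by (auto simp: differentiable_def)
qed

lemma differentiable_upto_add:
  "differentiable_upto k S f \<Longrightarrow> differentiable_upto k S g \<Longrightarrow> differentiable_upto k S (\<lambda>t. f t + g t)"
proof (induction k arbitrary: f g)
  case (Suc k)
  have "\<forall>t\<in>S. deriv f t + deriv g t = deriv (\<lambda>t. f t + g t) t"
    using Suc.prems by (auto intro!: DERIV_imp_deriv[symmetric] derivative_eq_intros has_real_derivative_deriv)
  moreover have "differentiable_upto k S (\<lambda>t. deriv f t + deriv g t)"
    using Suc by (simp add: differentiable_upto_Suc)
  ultimately have "differentiable_upto k S (deriv (\<lambda>t. f t + g t))"
    using differentiable_upto_cong_on by blast
  with Suc.prems show ?case by (auto simp: differentiable_upto_Suc)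
qed simp

lemma differentiable_upto_mult:
  "differentiable_upto k S f \<Longrightarrow> differentiable_upto k S g \<Longrightarrow> differentiable_upto k S (\<lambda>t. f t * g t)"
proof (induction k arbitrary: f g)
  case (Suc k)
  have "\<forall>t\<in>S. deriv f t * g t + f t * deriv g t = deriv (\<lambda>t. f t * g t) t"
    using Suc.prems by (auto intro!: DERIV_imp_deriv[symmetric] derivative_eq_intros has_real_derivative_deriv)
  moreover have "differentiable_upto k S (\<lambda>t. deriv f t * g t + f t * deriv g t)"
    using Suc.prems differentiable_upto_mono[of "Suc k" S f k] differentiable_upto_mono[of "Suc k" S g k]
    by (intro differentiable_upto_add Suc.IH) (auto simp: differentiable_upto_Suc)
  ultimately have "differentiable_upto k S (deriv (\<lambda>t. f t * g t))"
    using differentiable_upto_cong_on by blast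
  with Suc.prems show ?case by (auto simp: differentiable_upto_Suc)
qed simp

lemma differentiable_upto_inverse:
  "differentiable_upto k S f \<Longrightarrow> \<forall>x\<in>S. f x \<noteq> 0 \<Longrightarrow> differentiable_upto k S (\<lambda>t. inverse (f t))"
proof (induction k arbitrary: f)
  case (Suc k)
  have "\<forall>t\<in>S. - deriv f t * (inverse (f t) * inverse (f t)) = deriv (\<lambda>t. inverse (f t)) t"
    using Suc.prems by (auto intro!: DERIV_imp_deriv[symmetric] derivative_eq_intros has_real_derivative_deriv
        simp: power2_eq_square)
  moreover have "differentiable_upto k S (\<lambda>t. - deriv f t * (inverse (f t) * inverse (f t)))"
    using Suc.prems differentiable_upto_mono[of "Suc k" S f k]
      differentiable_upto_mult[of k "\<lambda>t. -1" "deriv f"]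
    by (intro differentiable_upto_mult Suc.IH) (auto simp: differentiable_upto_Suc)
  ultimately have "differentiable_upto k S (deriv (\<lambda>t. inverse (f t)))"
    using differentiable_upto_cong_on by blast
  moreover have "\<forall>x\<in>S. (\<lambda>t. inverse (f t)) differentiable (at x)"
    using Suc.prems by (auto intro!: derivative_intros simp: differentiable_upto_Suc)
  ultimately show ?case by (auto simp: differentiable_upto_Suc)
qed simp

lemma differentiable_upto_lincomb:
  "differentiable_upto k S f \<Longrightarrow> differentiable_upto k S g \<Longrightarrow>
     differentiable_upto k S (\<lambda>t. a * f t + b * g t)"
  by (intro differentiable_upto_add differentiable_upto_mult differentiable_upto_const)

lemma differentiable_upto_diff:
  "differentiable_upto k S f \<Longrightarrow> differentiable_upto k S g \<Longrightarrow> differentiable_upto k S (\<lambda>t. f t - g t)"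
  using differentiable_upto_lincomb[of k f g 1 "-1"] by simp

lemma differentiable_upto_power [simp]: "differentiable_upto k S (\<lambda>t. t ^ n)"
  by (induction n) (auto intro: differentiable_upto_mult[OF differentiable_upto_id, simplified])

lemma higher_deriv_lincomb:
  "differentiable_upto k S f \<Longrightarrow> differentiable_upto k S g \<Longrightarrow> x \<in> S \<Longrightarrow>
     (deriv ^^ k) (\<lambda>t. a * f t + b * g t) x = a * (deriv ^^ k) f x + b * (deriv ^^ k) g x"
proof (induction k arbitrary: f g x)
  case (Suc k)
  have "\<forall>t\<in>S. deriv (\<lambda>t. a * f t + b * g t) t = a * deriv f t + b * deriv g t"
    using Suc.prems by (auto intro!: DERIV_imp_deriv derivative_eq_intros has_real_derivative_deriv)
  then have "(deriv ^^ Suc k) (\<lambda>t. a * f t + b * g t) x = (deriv ^^ k) (\<lambda>t. a * deriv f t + b * deriv g t) x"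
    unfolding higher_deriv_Suc using Suc.prems(3) by (rule higher_deriv_cong_on)
  also have "\<dots> = a * (deriv ^^ k) (deriv f) x + b * (deriv ^^ k) (deriv g) x"
    using Suc.prems by (intro Suc.IH) (auto simp: differentiable_upto_Suc)
  finally show ?case by (simp only: higher_deriv_Suc)
qed simp

lemma higher_deriv_x_mult:
  "differentiable_upto (Suc m) S w \<Longrightarrow> x \<in> S \<Longrightarrow>
     (deriv ^^ Suc m) (\<lambda>t. t * w t) x = x * (deriv ^^ Suc m) w x + real (Suc m) * (deriv ^^ m) w x"
proof (induction m arbitrary: w x)
  case 0
  then show ?case by (auto intro!: DERIV_imp_deriv derivative_eq_intros has_real_derivative_deriv)
next
  case (Suc m)
  have "\<forall>t\<in>S. deriv (\<lambda>t. t * w t) t = 1 * w t + 1 * (t * deriv w t)"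
    using Suc.prems by (auto intro!: DERIV_imp_deriv derivative_eq_intros has_real_derivative_deriv)
  then have "(deriv ^^ Suc (Suc m)) (\<lambda>t. t * w t) x
      = (deriv ^^ Suc m) (\<lambda>t. 1 * w t + 1 * (t * deriv w t)) x"
    unfolding higher_deriv_Suc[of "Suc m"] using Suc.prems(2) by (rule higher_deriv_cong_on)
  also have "\<dots> = (deriv ^^ Suc m) w x + (deriv ^^ Suc m) (\<lambda>t. t * deriv w t) x"
    using Suc.prems differentiable_upto_mono[of "Suc (Suc m)" S w "Suc m"]
      differentiable_upto_Suc[of "Suc m" S w]
    by (subst higher_deriv_lincomb) (auto intro: differentiable_upto_mult)
  also have "(deriv ^^ Suc m) (\<lambda>t. t * deriv w t) x
      = x * (deriv ^^ Suc m) (deriv w) x + real (Suc m) * (deriv ^^ m) (deriv w) x"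
    using Suc.prems by (intro Suc.IH) (auto simp: differentiable_upto_Suc)
  finally show ?case
    by (simp add: higher_deriv_Suc[symmetric] algebra_simps del: funpow.simps)
qed

section \<open>The operators L_2^\<gamma> - c\<close>

text \<open>An abbreviation, so that products of these factors are literally the \<open>opprod\<close>
  expressions of the theorem.\<close>

abbreviation L2_minus :: "real \<Rightarrow> real \<Rightarrow> (real \<Rightarrow> real) \<Rightarrow> real \<Rightarrow> real" where
  "L2_minus \<gamma> c f \<equiv> \<lambda>t. L2 \<gamma> f t - c * f t"

lemma L2_cong_on: "\<forall>t\<in>S. f t = g t \<Longrightarrow> x \<in> S \<Longrightarrow> L2 \<gamma> f x = L2 \<gamma> g x"
  unfolding L2_def using higher_deriv_cong_on[of f g x 2] deriv_cong_on[of f g x] by simp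

lemma differentiable_upto_L2_minus:
  assumes "differentiable_upto (k + 2) S f"
  shows "differentiable_upto k S (L2_minus \<gamma> c f)"
proof -
  have "differentiable_upto k S ((deriv ^^ m) f)" if "m \<le> 2" for m
    using differentiable_upto_higher_deriv[of k m S f] differentiable_upto_mono[OF assms, of "k + m"] that
    by simp
  from this[of 0] this[of 1] this[of 2] show ?thesis
    unfolding L2_def
    by (intro differentiable_upto_diff differentiable_upto_add differentiable_upto_mult
        differentiable_upto_id differentiable_upto_const) simp_all
qed

lemma differentiable_upto_opprod_L2_minus:
  "differentiable_upto (k + 2 * m) S f \<Longrightarrow>
     differentiable_upto k S (opprod (\<lambda>j. L2_minus (a j) (c j)) m f)"
proof (induction m arbitrary: k)
  case (Suc m)
  then have "differentiable_upto (k + 2) S (opprod (\<lambda>j. L2_minus (a j) (c j)) m f)"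
    by (intro Suc.IH) (simp add: algebra_simps)
  then show ?case by (simp add: differentiable_upto_L2_minus)
qed simp

lemma deriv_L2_minus:
  assumes "differentiable_upto 3 S h" and "x \<in> S"
  shows "deriv (L2_minus \<gamma> c h) x = L2_minus (\<gamma> + 1) (c + 1) (deriv h) x"
proof -
  have "((deriv ^^ j) h has_real_derivative (deriv ^^ Suc j) h x) (at x)" if "j < 3" for j
    using has_real_derivative_higher_deriv[OF assms(1) that assms(2)] .
  from this[of 0] this[of 1] this[of 2]
  have h0: "(h has_real_derivative deriv h x) (at x)"
    and h1: "(deriv h has_real_derivative deriv (deriv h) x) (at x)"
    and h2: "(deriv (deriv h) has_real_derivative deriv (deriv (deriv h)) x) (at x)"
    by (simp_all add: eval_nat_numeral)
  show ?thesis
    unfolding L2_def eval_nat_numeral funpow.simps comp_def id_def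
    by (rule DERIV_imp_deriv) (rule derivative_eq_intros h0 h1 h2 refl | simp add: algebra_simps)+
qed

lemma L2_x_mult:
  assumes "differentiable_upto 2 S u" and "x \<in> S"
  shows "L2 \<gamma> (\<lambda>t. t * u t) x = x * L2 (\<gamma> + 2) u x + (\<gamma> + 1 - x) * u x"
proof -
  have "deriv (\<lambda>t. t * u t) x = x * deriv u x + u x"
    using higher_deriv_x_mult[of 0 u x] differentiable_upto_mono[OF assms(1)] assms(2) by simp
  moreover have "(deriv ^^ 2) (\<lambda>t. t * u t) x = x * (deriv ^^ 2) u x + 2 * deriv u x"
    using higher_deriv_x_mult[of 1 u x] assms by (simp add: numeral_2_eq_2 del: funpow.simps) simp
  ultimately show ?thesis
    unfolding L2_def by (simp add: algebra_simps)
qed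

lemma opprod_L2_conj_x:
  assumes "0 \<notin> S" and "\<And>j. d j = g j + 1"
  shows "differentiable_upto (2 * m) S u \<Longrightarrow> \<forall>t\<in>S. y t = t * u t \<Longrightarrow> x \<in> S \<Longrightarrow>
     opprod (\<lambda>j f t. L2 (g j) f t - d j / t * f t - c j * f t) m y x
       = x * opprod (\<lambda>j. L2_minus (g j + 2) (c j + 1)) m u x"
proof (induction m arbitrary: x)
  case (Suc m)
  define B where "B = opprod (\<lambda>j. L2_minus (g j + 2) (c j + 1)) m u"
  have B: "differentiable_upto 2 S B"
    unfolding B_def using Suc.prems(1) by (intro differentiable_upto_opprod_L2_minus) simp
  have IH: "\<forall>t\<in>S. opprod (\<lambda>j f t. L2 (g j) f t - d j / t * f t - c j * f t) m y t = t * B t"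
    unfolding B_def using Suc.IH Suc.prems(1,2) differentiable_upto_mono by fastforce
  have "opprod (\<lambda>j f t. L2 (g j) f t - d j / t * f t - c j * f t) (Suc m) y x
      = L2 (g m) (\<lambda>t. t * B t) x - (g m + 1) / x * (x * B x) - c m * (x * B x)"
    using L2_cong_on[OF IH Suc.prems(3)] IH Suc.prems(3) by (simp add: assms(2))
  also have "\<dots> = x * L2_minus (g m + 2) (c m + 1) B x"
    unfolding L2_x_mult[OF B Suc.prems(3)] using Suc.prems(3) assms(1)
    by (cases "x = 0") (simp_all add: field_simps)
  finally show ?case by (simp add: B_def)
qed simp

lemma L2_minus_comp:
  assumes "differentiable_upto 4 S h" and "x \<in> S"
  shows "L2_minus p a (L2_minus q b h) x =
    x * L2_minus (q + 2) (b + 2) (deriv (deriv h)) x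
    + (p + 1 - x) * L2_minus (q + 1) (b + 1) (deriv h) x - a * L2_minus q b h x"
proof -
  have h: "differentiable_upto 3 S h" and dh: "differentiable_upto 3 S (deriv h)"
    using assms(1) differentiable_upto_mono[of 4 S h 3] differentiable_upto_Suc[of 3 S h]
    by (simp_all add: eval_nat_numeral)
  have d1: "deriv (L2_minus q b h) x = L2_minus (q + 1) (b + 1) (deriv h) x"
    by (rule deriv_L2_minus[OF h assms(2)])
  have "deriv (deriv (L2_minus q b h)) x = deriv (L2_minus (q + 1) (b + 1) (deriv h)) x"
    using deriv_L2_minus[OF h] assms(2) by (intro deriv_cong_on) auto
  also have "\<dots> = L2_minus (q + 2) (b + 2) (deriv (deriv h)) x"
    by (subst deriv_L2_minus[OF dh assms(2)]) (simp add: add.assoc)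
  finally have d2: "deriv (deriv (L2_minus q b h)) x = L2_minus (q + 2) (b + 2) (deriv (deriv h)) x" .
  show ?thesis
    unfolding L2_def[of p] by (simp add: numeral_2_eq_2 d1 d2)
qed

lemma L2_minus_comp_commute:
  assumes "differentiable_upto 4 S h" and "x \<in> S"
  shows "L2_minus a (m + 2) (L2_minus (a + m) (m + 1) h) x
       = L2_minus (a + m + 1) (m + 2) (L2_minus (a - 1) (m + 1) h) x"
  by (simp only: L2_minus_comp[OF assms]) (simp add: L2_def eval_nat_numeral algebra_simps)

lemma opprod_L2_minus_const_Suc:
  "differentiable_upto (2 * m + 2) S f \<Longrightarrow> x \<in> S \<Longrightarrow>
     opprod (\<lambda>j. L2_minus a (real j + 1)) (Suc m) f x
       = L2_minus (a + real m) (real m + 1) (opprod (\<lambda>j. L2_minus (a - 1) (real j + 1)) m f) x"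
proof (induction m arbitrary: x)
  case (Suc m)
  define H where "H = opprod (\<lambda>j. L2_minus (a - 1) (real j + 1)) m f"
  have H: "differentiable_upto 4 S H"
    unfolding H_def
    by (intro differentiable_upto_opprod_L2_minus differentiable_upto_mono[OF Suc.prems(1)]) simp
  have IH: "\<forall>t\<in>S. opprod (\<lambda>j. L2_minus a (real j + 1)) (Suc m) f t
      = L2_minus (a + real m) (real m + 1) H t"
    unfolding H_def using Suc.IH Suc.prems(1) differentiable_upto_mono by fastforce
  have "opprod (\<lambda>j. L2_minus a (real j + 1)) (Suc (Suc m)) f x
      = L2_minus a (real m + 2) (L2_minus (a + real m) (real m + 1) H) x"
    by (simp only: opprod.simps(2)[of _ "Suc m"] L2_cong_on[OF IH Suc.prems(2)]
        IH[rule_format, OF Suc.prems(2)]) simp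
  also have "\<dots> = L2_minus (a + real m + 1) (real m + 2) (L2_minus (a - 1) (real m + 1) H) x"
    by (rule L2_minus_comp_commute[OF H Suc.prems(2)])
  also have "\<dots> = L2_minus (a + real (Suc m)) (real (Suc m) + 1)
      (opprod (\<lambda>j. L2_minus (a - 1) (real j + 1)) (Suc m) f) x"
    by (simp add: H_def algebra_simps)
  finally show ?case .
qed simp

lemma opprod_L2_minus_const_eq_odd:
  "differentiable_upto (2 * n) S f \<Longrightarrow> x \<in> S \<Longrightarrow>
     opprod (\<lambda>j. L2_minus (real n) (real j + 1)) n f x
       = opprod (\<lambda>j. L2_minus (2 * real j + 1) (real j + 1)) n f x"
proof (induction n arbitrary: x)
  case (Suc n)
  have IH: "\<forall>t\<in>S. opprod (\<lambda>j. L2_minus (real n) (real j + 1)) n f t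
      = opprod (\<lambda>j. L2_minus (2 * real j + 1) (real j + 1)) n f t"
    using Suc.IH Suc.prems(1) differentiable_upto_mono by fastforce
  have "opprod (\<lambda>j. L2_minus (real (Suc n)) (real j + 1)) (Suc n) f x
      = L2_minus (2 * real n + 1) (real n + 1) (opprod (\<lambda>j. L2_minus (real n) (real j + 1)) n f) x"
    using opprod_L2_minus_const_Suc[of n f x "real (Suc n)"] Suc.prems by (simp add: algebra_simps)
  then show ?case
    using L2_cong_on[OF IH Suc.prems(2)] IH Suc.prems(2) by simp
qed simp

section \<open>The operator D - 1\<close>

definition D_minus_one :: "(real \<Rightarrow> real) \<Rightarrow> real \<Rightarrow> real" where
  "D_minus_one f = (\<lambda>t. deriv f t - f t)"

lemma D_minus_one_power_cong_on:
  "\<forall>t\<in>S. f t = g t \<Longrightarrow> x \<in> S \<Longrightarrow> (D_minus_one ^^ n) f x = (D_minus_one ^^ n) g x"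
proof (induction n arbitrary: x)
  case (Suc n)
  then show ?case by (simp add: D_minus_one_def deriv_cong_on)
qed simp

lemma differentiable_upto_D_minus_one:
  "differentiable_upto (Suc k) S f \<Longrightarrow> differentiable_upto k S (D_minus_one f)"
  unfolding D_minus_one_def
  using differentiable_upto_lincomb[of k "deriv f" f 1 "-1"] differentiable_upto_mono[of "Suc k" S f k]
  by (simp add: differentiable_upto_Suc)

lemma higher_deriv_exp_minus_mult:
  "differentiable_upto n S g \<Longrightarrow> x \<in> S \<Longrightarrow>
     (deriv ^^ n) (\<lambda>t. exp (- t) * g t) x = exp (- x) * (D_minus_one ^^ n) g x"
proof (induction n arbitrary: g x)
  case (Suc n)
  have "\<forall>t\<in>S. deriv (\<lambda>t. exp (- t) * g t) t = exp (- t) * D_minus_one g t"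
  proof
    fix t assume "t \<in> S"
    have "((\<lambda>t. exp (- t) * g t) has_real_derivative exp (- t) * (- 1) * g t + exp (- t) * deriv g t) (at t)"
      using Suc.prems(1) \<open>t \<in> S\<close> by (auto intro!: derivative_eq_intros has_real_derivative_deriv)
    then show "deriv (\<lambda>t. exp (- t) * g t) t = exp (- t) * D_minus_one g t"
      unfolding D_minus_one_def by (simp add: DERIV_imp_deriv algebra_simps)
  qed
  then have "(deriv ^^ Suc n) (\<lambda>t. exp (- t) * g t) x = (deriv ^^ n) (\<lambda>t. exp (- t) * D_minus_one g t) x"
    unfolding higher_deriv_Suc using Suc.prems(2) by (rule higher_deriv_cong_on)
  also have "\<dots> = exp (- x) * (D_minus_one ^^ n) (D_minus_one g) x"
    using Suc.prems by (intro Suc.IH differentiable_upto_D_minus_one)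
  finally show ?case by (simp add: funpow_Suc_right del: funpow.simps)
qed simp

lemma D_minus_one_x_deriv:
  assumes "differentiable_upto 2 S g" and "x \<in> S"
  shows "D_minus_one (\<lambda>t. t * deriv g t + c * g t) x = L2_minus c c g x"
proof -
  have h0: "(g has_real_derivative deriv g x) (at x)"
    using assms by (intro has_real_derivative_deriv) auto
  have h1: "(deriv g has_real_derivative (deriv ^^ 2) g x) (at x)"
    using has_real_derivative_higher_deriv[OF assms(1), of 1 x] assms(2) by (simp add: numeral_2_eq_2)
  have "deriv (\<lambda>t. t * deriv g t + c * g t) x = deriv g x + x * (deriv ^^ 2) g x + c * deriv g x"
    by (rule DERIV_imp_deriv) (auto intro!: derivative_eq_intros h0 h1)
  then show ?thesis
    unfolding D_minus_one_def L2_def by (simp add: algebra_simps)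
qed

lemma D_minus_one_L2_minus:
  assumes "differentiable_upto 3 S g" and "x \<in> S"
  shows "D_minus_one (L2_minus \<gamma> c g) x = L2_minus (\<gamma> + 1) c (D_minus_one g) x"
proof -
  have "(deriv ^^ k) (\<lambda>t. deriv g t - g t) x = (deriv ^^ Suc k) g x - (deriv ^^ k) g x"
    if "k \<le> 2" for k
  proof -
    have "differentiable_upto k S (deriv g)" "differentiable_upto k S g"
      using assms(1) that differentiable_upto_mono[of 3 S g "Suc k"] differentiable_upto_mono[of 3 S g k]
      by (auto simp: differentiable_upto_Suc)
    then show ?thesis
      using higher_deriv_lincomb[of k "deriv g" g x 1 "-1"] assms(2)
      by (simp add: higher_deriv_Suc del: funpow.simps)
  qed
  from this[of 1] this[of 2]
  have d1: "deriv (\<lambda>t. deriv g t - g t) x = deriv (deriv g) x - deriv g x"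
    and d2: "deriv (deriv (\<lambda>t. deriv g t - g t)) x = deriv (deriv (deriv g)) x - deriv (deriv g) x"
    by (simp_all add: eval_nat_numeral)
  have "D_minus_one (L2_minus \<gamma> c g) x = L2_minus (\<gamma> + 1) (c + 1) (deriv g) x - L2_minus \<gamma> c g x"
    unfolding D_minus_one_def using deriv_L2_minus[OF assms] by simp
  also have "\<dots> = L2_minus (\<gamma> + 1) c (D_minus_one g) x"
    unfolding D_minus_one_def L2_def by (simp add: eval_nat_numeral d1 d2 algebra_simps)
  finally show ?thesis .
qed

lemma D_minus_one_power_L2_minus:
  "differentiable_upto (n + 2) S g \<Longrightarrow> x \<in> S \<Longrightarrow>
     (D_minus_one ^^ n) (L2_minus \<gamma> c g) x = L2_minus (\<gamma> + real n) c ((D_minus_one ^^ n) g) x"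
proof (induction n arbitrary: g \<gamma> x)
  case (Suc n)
  have "(D_minus_one ^^ Suc n) (L2_minus \<gamma> c g) x = (D_minus_one ^^ n) (D_minus_one (L2_minus \<gamma> c g)) x"
    by (simp add: funpow_Suc_right del: funpow.simps)
  also have "\<dots> = (D_minus_one ^^ n) (L2_minus (\<gamma> + 1) c (D_minus_one g)) x"
    using Suc.prems differentiable_upto_mono[of "Suc n + 2" S g 3]
    by (intro D_minus_one_power_cong_on) (auto intro!: D_minus_one_L2_minus)
  also have "\<dots> = L2_minus (\<gamma> + 1 + real n) c ((D_minus_one ^^ n) (D_minus_one g)) x"
    using Suc.prems by (intro Suc.IH differentiable_upto_D_minus_one) auto
  finally show ?case
    by (simp add: funpow_Suc_right algebra_simps del: funpow.simps)
qed simp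

section \<open>A Rodrigues-type formula\<close>

text \<open>On S this is e^x D^n (e^(-x) D^n [x^n u]), by \<open>higher_deriv_exp_minus_mult\<close>.\<close>

definition rodrigues :: "nat \<Rightarrow> (real \<Rightarrow> real) \<Rightarrow> real \<Rightarrow> real" where
  "rodrigues n u = (D_minus_one ^^ n) ((deriv ^^ n) (\<lambda>s. s ^ n * u s))"

lemma rodrigues_Suc:
  assumes "differentiable_upto (2 * n + 2) S u" and "x \<in> S"
  shows "rodrigues (Suc n) u x = L2_minus (2 * real n + 1) (real n + 1) (rodrigues n u) x"
proof -
  define w where "w = (\<lambda>s. s ^ n * u s)"
  define g where "g = (deriv ^^ n) w"
  have w: "differentiable_upto (2 * n + 2) S w"
    unfolding w_def using assms(1) by (intro differentiable_upto_mult) simp_all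
  then have g: "differentiable_upto (n + 2) S g"
    unfolding g_def using differentiable_upto_higher_deriv[of "n + 2" n S w] by (simp add: mult_2)
  have Leibniz: "\<forall>t\<in>S. (deriv ^^ Suc n) (\<lambda>s. s * w s) t = t * deriv g t + real (Suc n) * g t"
    using higher_deriv_x_mult[OF differentiable_upto_mono[OF w]] by (simp add: g_def)
  have "D_minus_one ((deriv ^^ Suc n) (\<lambda>s. s * w s)) t = L2_minus (real (Suc n)) (real (Suc n)) g t"
    if "t \<in> S" for t
  proof -
    have "D_minus_one ((deriv ^^ Suc n) (\<lambda>s. s * w s)) t
        = D_minus_one (\<lambda>t. t * deriv g t + real (Suc n) * g t) t"
      using D_minus_one_power_cong_on[OF Leibniz that, of 1] by simp
    also have "\<dots> = L2_minus (real (Suc n)) (real (Suc n)) g t"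
      by (rule D_minus_one_x_deriv[OF differentiable_upto_mono[OF g] that]) simp
    finally show ?thesis .
  qed
  then have "rodrigues (Suc n) u x = (D_minus_one ^^ n) (L2_minus (real (Suc n)) (real (Suc n)) g) x"
    unfolding rodrigues_def using assms(2)
    by (simp add: funpow_Suc_right w_def algebra_simps D_minus_one_power_cong_on del: funpow.simps)
  also have "\<dots> = L2_minus (2 * real n + 1) (real n + 1) (rodrigues n u) x"
    using D_minus_one_power_L2_minus[OF g assms(2)] by (simp add: rodrigues_def g_def w_def)
  finally show ?thesis .
qed

lemma rodrigues_eq_opprod:
  "differentiable_upto (2 * n) S u \<Longrightarrow> x \<in> S \<Longrightarrow>
     rodrigues n u x = opprod (\<lambda>j. L2_minus (2 * real j + 1) (real j + 1)) n u x"
proof (induction n arbitrary: x)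
  case 0
  then show ?case by (simp add: rodrigues_def)
next
  case (Suc n)
  have IH: "\<forall>t\<in>S. rodrigues n u t = opprod (\<lambda>j. L2_minus (2 * real j + 1) (real j + 1)) n u t"
    using Suc.IH Suc.prems(1) differentiable_upto_mono by fastforce
  have "rodrigues (Suc n) u x = L2_minus (2 * real n + 1) (real n + 1) (rodrigues n u) x"
    using Suc.prems by (intro rodrigues_Suc) auto
  then show ?case
    using L2_cong_on[OF IH Suc.prems(2)] IH Suc.prems(2) by simp
qed

lemma Lhigh_x_mult:
  assumes "differentiable_upto (2 * \<alpha> + 4) S u" and "\<forall>t\<in>S. y t = t * u t" and "x \<in> S"
  shows "Lhigh \<alpha> y x = (-1) ^ (\<alpha> + 1) * x * rodrigues (\<alpha> + 2) u x"
proof -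
  let ?D = "(deriv ^^ (\<alpha> + 2)) (\<lambda>s. s ^ (\<alpha> + 2) * u s)"
  have y: "\<forall>t\<in>S. t ^ (\<alpha> + 1) * y t = t ^ (\<alpha> + 2) * u t"
    using assms(2) by (simp add: power_add power2_eq_square)
  have inner: "\<forall>t\<in>S. (deriv ^^ (\<alpha> + 2)) (\<lambda>s. s ^ (\<alpha> + 1) * y s) t = ?D t"
    using higher_deriv_cong_on[OF y] by blast
  have "(deriv ^^ (\<alpha> + 2)) (\<lambda>t. exp (- t) * (deriv ^^ (\<alpha> + 2)) (\<lambda>s. s ^ (\<alpha> + 1) * y s) t) x
      = (deriv ^^ (\<alpha> + 2)) (\<lambda>t. exp (- t) * ?D t) x"
    by (rule higher_deriv_cong_on) (use inner assms(3) in simp_all)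
  then have Lhigh_eq:
      "Lhigh \<alpha> y x = (-1) ^ (\<alpha> + 1) * exp x * x * (deriv ^^ (\<alpha> + 2)) (\<lambda>t. exp (- t) * ?D t) x"
    unfolding Lhigh_def by (rule arg_cong)
  have "differentiable_upto ((\<alpha> + 2) + (\<alpha> + 2)) S (\<lambda>s. s ^ (\<alpha> + 2) * u s)"
    by (intro differentiable_upto_mult differentiable_upto_power differentiable_upto_mono[OF assms(1)]) simp
  then have D: "differentiable_upto (\<alpha> + 2) S ?D"
    by (rule differentiable_upto_higher_deriv)
  have "Lhigh \<alpha> y x = (-1) ^ (\<alpha> + 1) * x * (exp x * exp (- x)) * (D_minus_one ^^ (\<alpha> + 2)) ?D x"
    unfolding Lhigh_eq higher_deriv_exp_minus_mult[OF D assms(3)] by (simp only: ac_simps)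
  then show ?thesis
    unfolding rodrigues_def exp_minus_inverse by simp
qed

lemma Lhigh_eq_x_opprod_odd:
  assumes "differentiable_upto (2 * \<alpha> + 4) S u" and "\<forall>t\<in>S. y t = t * u t" and "x \<in> S"
  shows "Lhigh \<alpha> y x
    = (-1) ^ (\<alpha> + 1) * x * opprod (\<lambda>j. L2_minus (2 * real j + 1) (real j + 1)) (\<alpha> + 2) u x"
  using Lhigh_x_mult[OF assms] rodrigues_eq_opprod[OF differentiable_upto_mono[OF assms(1)] assms(3)]
  by simp

lemma Lhigh_eq_x_opprod_const:
  assumes "differentiable_upto (2 * \<alpha> + 4) S u" and "\<forall>t\<in>S. y t = t * u t" and "x \<in> S"
  shows "Lhigh \<alpha> y x
    = (-1) ^ (\<alpha> + 1) * x * opprod (\<lambda>j. L2_minus (real \<alpha> + 2) (real j + 1)) (\<alpha> + 2) u x"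
proof -
  have "opprod (\<lambda>j. L2_minus (real \<alpha> + 2) (real j + 1)) (\<alpha> + 2) u x
      = opprod (\<lambda>j. L2_minus (2 * real j + 1) (real j + 1)) (\<alpha> + 2) u x"
    using opprod_L2_minus_const_eq_odd[OF differentiable_upto_mono[OF assms(1)] assms(3), of "\<alpha> + 2"]
    by (simp only: of_nat_add of_nat_numeral) simp
  then show ?thesis
    unfolding Lhigh_eq_x_opprod_odd[OF assms] by (simp only:)
qed

end

theorem theorem3p1:
  fixes \<alpha> :: nat and y u :: "real \<Rightarrow> real"
  assumes "C_k_on (2 * \<alpha> + 4) {0<..} y"
    and "C_k_on (2 * \<alpha> + 4) {0<..} u"
  shows "\<forall>x>0.
     Lhigh \<alpha> y x = (-1) ^ (\<alpha> + 1) *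
        opprod (\<lambda>j f t. L2 (real \<alpha>) f t - (real \<alpha> + 1) / t * f t - real j * f t) (\<alpha> + 2) y x
   \<and> Lhigh \<alpha> (\<lambda>t. t * u t) x = (-1) ^ (\<alpha> + 1) * x *
        opprod (\<lambda>j f t. L2 (real \<alpha> + 2) f t - (real j + 1) * f t) (\<alpha> + 2) u x
   \<and> Lhigh \<alpha> y x = (-1) ^ (\<alpha> + 1) *
        opprod (\<lambda>j f t. L2 (2 * real j - 1) f t - 2 * real j / t * f t - real j * f t) (\<alpha> + 2) y x
   \<and> Lhigh \<alpha> (\<lambda>t. t * u t) x = (-1) ^ (\<alpha> + 1) * x *
        opprod (\<lambda>j f t. L2 (2 * real j + 1) f t - (real j + 1) * f t) (\<alpha> + 2) u x"
proof (intro allI impI, goal_cases)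
  case (1 x)
  then have x: "x \<in> {0<..}" by simp
  have S: "open {0::real<..}" "0 \<notin> {0::real<..}" by simp_all
  have y: "differentiable_upto (2 * \<alpha> + 4) {0<..} y"
    and u: "differentiable_upto (2 * \<alpha> + 4) {0<..} u"
    using assms by (simp_all add: C_k_on_imp_differentiable_upto)
  define v where "v t = y t * inverse t" for t
  have v: "differentiable_upto (2 * \<alpha> + 4) {0<..} v"
    unfolding v_def using S(1) y by (intro differentiable_upto_mult differentiable_upto_inverse) auto
  have yv: "\<forall>t\<in>{0<..}. y t = t * v t" and xu: "\<forall>t\<in>{0<..}. t * u t = t * u t"
    by (simp_all add: v_def)
  have v2: "differentiable_upto (2 * (\<alpha> + 2)) {0<..} v"
    by (rule differentiable_upto_mono[OF v]) simp
  have d3: "2 * real j = 2 * real j - 1 + 1" for j :: nat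
    by simp
  have odd: "(\<lambda>j. L2_minus (2 * real j - 1 + 2) (real j + 1))
      = (\<lambda>j. L2_minus (2 * real j + 1) (real j + 1))"
    by (simp add: algebra_simps)
  note conj1 = opprod_L2_conj_x[OF S refl v2 yv x, where g = "\<lambda>j. real \<alpha>" and c = "\<lambda>j. real j"]
  note conj3 = opprod_L2_conj_x[OF S d3 v2 yv x, where c = "\<lambda>j. real j"]
  have "Lhigh \<alpha> y x = (-1) ^ (\<alpha> + 1) *
      opprod (\<lambda>j f t. L2 (real \<alpha>) f t - (real \<alpha> + 1) / t * f t - real j * f t) (\<alpha> + 2) y x"
    by (simp only: Lhigh_eq_x_opprod_const[OF S(1) v yv x] conj1 mult.assoc)
  moreover have "Lhigh \<alpha> y x = (-1) ^ (\<alpha> + 1) *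
      opprod (\<lambda>j f t. L2 (2 * real j - 1) f t - 2 * real j / t * f t - real j * f t) (\<alpha> + 2) y x"
    by (simp only: Lhigh_eq_x_opprod_odd[OF S(1) v yv x] conj3 odd mult.assoc)
  ultimately show ?case
    using Lhigh_eq_x_opprod_const[OF S(1) u xu x] Lhigh_eq_x_opprod_odd[OF S(1) u xu x] by blast
qed

end
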